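(* Let $V$ be a vertex operator algebra of CFT type and $M=\bigoplus_{n\ge0}M(n)$ an admissible $V$-module strongly generated by $w_1,\dots,w_r$ with $w_i\in M(n_i)$ for all $i$. Then for all $n\ge0$, $$A(M)_n=A(V)_{n-n_1}\ast w_1+\dots+A(V)_{n-n_r}\ast w_r\quad\text{and}\quad A(M)_n=w_1\ast A(V)_{n-n_1}+\dots+w_r\ast A(V)_{n-n_r},$$ where $w_i$ also denotes its image in $A(M)$.
   Context: $V_0=\mathbb{C}\mathbf{1}$, $V_+=\bigoplus_{n\ge1}V_n$, $Y_M(a,z)=\sum_na_nz^{-n-1}$. $M$ is strongly generated by a set $W$ if it is spanned by $a^1_{-n_1}\cdots a^k_{-n_k}w$ with $k\ge0$, $a^i\in V_+$ homogeneous, $n_i\ge1$, $w\in W$. Zhu's algebra $A(V)=V/O(V)$, $O(V)$ spanned by $\mathrm{Res}_zY(a,z)b\frac{(1+z)^{\mathrm{wt} a}}{z^2}$, product $a\ast b=\mathrm{Res}_zY(a,z)b\frac{(1+z)^{\mathrm{wt} a}}{z}$; $A(V)_n$ is the image of $\bigoplus_{i\le n}V_i$, and $A(V)_k=0$ for $k<0$. $A(M)=M/O(M)$, $O(M)$ spanned by $\mathrm{Res}_zY_M(a,z)v\frac{(1+z)^{\mathrm{wt} a}}{z^2}$, is an $A(V)$-bimodule with $a\ast v=\mathrm{Res}_zY_M(a,z)v\frac{(1+z)^{\mathrm{wt} a}}{z}$ and $v\ast a=\mathrm{Res}_zY_M(a,z)v\frac{(1+z)^{\mathrm{wt} a-1}}{z}$;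 $A(M)_n$ is the image of $\bigoplus_{i=0}^nM(i)$ in $A(M)$. *)

theory Defs
  imports Complex_Main
begin

text \<open>
  Vector spaces over the complex numbers are modelled as types of class
  ab_group_add together with a scalar multiplication (locale vector_space of
  HOL/Vector_Spaces).  Vertex operators are given by their modes:
  Y a n b = a_n b, i.e. Y(a,z) b = sum_n (a_n b) z^(-n-1).
\<close>

type_synonym ('v,'m) vop = "'v \<Rightarrow> int \<Rightarrow> 'm \<Rightarrow> 'm"

definition ibinom :: "int \<Rightarrow> nat \<Rightarrow> complex" where
  "ibinom m i = (of_int m) gchoose i"

text \<open>All three sums are finite; we sum over {..<N} for any N beyond which all
  terms vanish.\<close>
definition borcherds :: "('v::ab_group_add,'v) vop \<Rightarrow> (complex \<Rightarrow> 'm::ab_group_add \<Rightarrow> 'm) \<Rightarrow> ('v,'m) vop \<Rightarrow> bool" where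
  "borcherds Y sM YM \<longleftrightarrow>
    (\<forall>a b v m n k N.
       (\<forall>i\<ge>N. Y a (k + int i) b = 0 \<and> YM b (n + int i) v = 0 \<and> YM a (m + int i) v = 0) \<longrightarrow>
       (\<Sum>i<N. sM (ibinom m i) (YM (Y a (k + int i) b) (m + n - int i) v))
       = (\<Sum>i<N. sM ((-1)^i * ibinom k i)
             (YM a (m + k - int i) (YM b (n + int i) v)
              - sM ((-1) ^ nat \<bar>k\<bar>) (YM b (n + k - int i) (YM a (m + int i) v)))))"

definition weak_module ::
  "(complex \<Rightarrow> 'v::ab_group_add \<Rightarrow> 'v) \<Rightarrow> ('v,'v) vop \<Rightarrow> 'v \<Rightarrow>
   (complex \<Rightarrow> 'm::ab_group_add \<Rightarrow> 'm) \<Rightarrow> ('v,'m) vop \<Rightarrow> bool" where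
  "weak_module sV Y vac sM YM \<longleftrightarrow>
     vector_space sM \<and>
     (\<forall>a n. Vector_Spaces.linear sM sM (YM a n)) \<and>
     (\<forall>n v. Vector_Spaces.linear sV sM (\<lambda>a. YM a n v)) \<and>
     (\<forall>a v. \<exists>N. \<forall>n\<ge>N. YM a n v = 0) \<and>
     (\<forall>n v. YM vac n v = (if n = -1 then v else 0)) \<and>
     borcherds Y sM YM"

definition Lop :: "('v,'m) vop \<Rightarrow> 'v \<Rightarrow> int \<Rightarrow> 'm \<Rightarrow> 'm" where
  "Lop YM \<omega> n = YM \<omega> (n + 1)"

definition Vdeg :: "(complex \<Rightarrow> 'v \<Rightarrow> 'v) \<Rightarrow> ('v,'v) vop \<Rightarrow> 'v \<Rightarrow> int \<Rightarrow> 'v set" where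
  "Vdeg sV Y \<omega> n = {v. Lop Y \<omega> 0 v = sV (of_int n) v}"

definition is_VOA ::
  "(complex \<Rightarrow> 'v::ab_group_add \<Rightarrow> 'v) \<Rightarrow> ('v,'v) vop \<Rightarrow> 'v \<Rightarrow> 'v \<Rightarrow> complex \<Rightarrow> bool" where
  "is_VOA sV Y vac \<omega> c \<longleftrightarrow>
     vector_space sV \<and>
     weak_module sV Y vac sV Y \<and>
     (\<forall>a. Y a (-1) vac = a \<and> (\<forall>n\<ge>0. Y a n vac = 0)) \<and>
     \<comment> \<open>grading by L(0): V = direct sum of the V_n (eigenspaces are automatically independent)\<close>
     (\<forall>v. v \<in> module.span sV (\<Union>n. Vdeg sV Y \<omega> n)) \<and>
     (\<forall>n. \<exists>B. finite B \<and> Vdeg sV Y \<omega> n \<subseteq> module.span sV B) \<and>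
     (\<exists>N. \<forall>n<N. Vdeg sV Y \<omega> n = {0}) \<and>
     \<omega> \<in> Vdeg sV Y \<omega> 2 \<and>
     \<comment> \<open>Virasoro relations\<close>
     (\<forall>m n v. Lop Y \<omega> m (Lop Y \<omega> n v) - Lop Y \<omega> n (Lop Y \<omega> m v)
        = sV (of_int (m - n)) (Lop Y \<omega> (m + n) v)
          + (if m + n = 0 then sV ((of_int (m^3 - m) / 12) * c) v else 0)) \<and>
     \<comment> \<open>L(-1)-derivative property\<close>
     (\<forall>a n. Y (Lop Y \<omega> (-1) a) n = (\<lambda>b. sV (- of_int n) (Y a (n - 1) b)))"

definition is_VOA_CFT_type ::
  "(complex \<Rightarrow> 'v::ab_group_add \<Rightarrow> 'v) \<Rightarrow> ('v,'v) vop \<Rightarrow> 'v \<Rightarrow> 'v \<Rightarrow> complex \<Rightarrow> bool" where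
  "is_VOA_CFT_type sV Y vac \<omega> c \<longleftrightarrow>
     is_VOA sV Y vac \<omega> c \<and>
     (\<forall>n<0. Vdeg sV Y \<omega> n = {0}) \<and>
     Vdeg sV Y \<omega> 0 = {sV z vac | z. True}"

definition admissible ::
  "(complex \<Rightarrow> 'v::ab_group_add \<Rightarrow> 'v) \<Rightarrow> ('v,'v) vop \<Rightarrow> 'v \<Rightarrow> 'v \<Rightarrow>
   (complex \<Rightarrow> 'm::ab_group_add \<Rightarrow> 'm) \<Rightarrow> ('v,'m) vop \<Rightarrow> (nat \<Rightarrow> 'm set) \<Rightarrow> bool" where
  "admissible sV Y vac \<omega> sM YM Mg \<longleftrightarrow>
     weak_module sV Y vac sM YM \<and>
     (\<forall>n. module.subspace sM (Mg n)) \<and>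
     (\<forall>v. v \<in> module.span sM (\<Union>n. Mg n)) \<and>
     (\<forall>F f. finite F \<and> (\<forall>n\<in>F. f n \<in> Mg n) \<and> (\<Sum>n\<in>F. f n) = 0 \<longrightarrow> (\<forall>n\<in>F. f n = 0)) \<and>
     (\<forall>a k m n v. a \<in> Vdeg sV Y \<omega> k \<and> v \<in> Mg n \<longrightarrow>
        (if k - m - 1 + int n \<ge> 0 then YM a m v \<in> Mg (nat (k - m - 1 + int n))
         else YM a m v = 0))"

inductive_set strong_words ::
  "(complex \<Rightarrow> 'v \<Rightarrow> 'v) \<Rightarrow> ('v,'v) vop \<Rightarrow> 'v \<Rightarrow> ('v,'m) vop \<Rightarrow> 'm set \<Rightarrow> 'm set"
  for sV Y \<omega> YM W where
  base: "w \<in> W \<Longrightarrow> w \<in> strong_words sV Y \<omega> YM W"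
| step: "a \<in> Vdeg sV Y \<omega> k \<Longrightarrow> k \<ge> 1 \<Longrightarrow> n \<ge> 1 \<Longrightarrow> x \<in> strong_words sV Y \<omega> YM W \<Longrightarrow>
         YM a (- n) x \<in> strong_words sV Y \<omega> YM W"

definition strongly_generated where
  "strongly_generated sV Y \<omega> sM YM W \<longleftrightarrow>
     (\<forall>v. v \<in> module.span sM (strong_words sV Y \<omega> YM W))"

text \<open>For homogeneous a of weight k and v in M:
  a * v = Res_z Y_M(a,z) v (1+z)^k / z = sum_i binom(k,i) a_{i-1} v,
  v * a = Res_z Y_M(a,z) v (1+z)^(k-1) / z = sum_i binom(k-1,i) a_{i-1} v,
  and the generator of O(M): Res_z Y_M(a,z) v (1+z)^k / z^2 = sum_i binom(k,i) a_{i-2} v.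
  (For v * a the sum is over i \<le> k: for k \<ge> 1 the further binomials vanish, and
  for k = 0 in a VOA of CFT type a is a multiple of the vacuum, whose modes
  a_{i-1}, i \<ge> 1, vanish.)\<close>
definition star_left :: "(complex \<Rightarrow> 'm::ab_group_add \<Rightarrow> 'm) \<Rightarrow> ('v,'m) vop \<Rightarrow> 'v \<Rightarrow> nat \<Rightarrow> 'm \<Rightarrow> 'm" where
  "star_left sM YM a k v = (\<Sum>i\<le>k. sM (ibinom (int k) i) (YM a (int i - 1) v))"

definition star_right :: "(complex \<Rightarrow> 'm::ab_group_add \<Rightarrow> 'm) \<Rightarrow> ('v,'m) vop \<Rightarrow> 'm \<Rightarrow> 'v \<Rightarrow> nat \<Rightarrow> 'm" where
  "star_right sM YM v a k = (\<Sum>i\<le>k. sM (ibinom (int k - 1) i) (YM a (int i - 1) v))"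

definition circ_elt :: "(complex \<Rightarrow> 'm::ab_group_add \<Rightarrow> 'm) \<Rightarrow> ('v,'m) vop \<Rightarrow> 'v \<Rightarrow> nat \<Rightarrow> 'm \<Rightarrow> 'm" where
  "circ_elt sM YM a k v = (\<Sum>i\<le>k. sM (ibinom (int k) i) (YM a (int i - 2) v))"

definition OM where
  "OM sV Y \<omega> sM YM = module.span sM {circ_elt sM YM a k v | a k v. a \<in> Vdeg sV Y \<omega> (int k)}"

text \<open>Preimage in M of A(M)_n: the span of (+)_{i \<le> n} M(i) together with O(M).\<close>
definition AM_filt where
  "AM_filt sV Y \<omega> sM YM Mg n = module.span sM ((\<Union>i\<le>n. Mg i) \<union> OM sV Y \<omega> sM YM)"

text \<open>Preimage in M of  A(V)_{n-n_1} * w_1 + ... + A(V)_{n-n_r} * w_r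
  (A(V)_j is the image of (+)_{i \<le> j} V_i; by linearity of * in a it suffices
  to take homogeneous a).\<close>
definition left_gen_span where
  "left_gen_span sV Y \<omega> sM YM r w nn n =
     module.span sM ((\<Union>i<r. {star_left sM YM a k (w i) | a k.
         a \<in> Vdeg sV Y \<omega> (int k) \<and> int k \<le> int n - int (nn i)}) \<union> OM sV Y \<omega> sM YM)"

definition right_gen_span where
  "right_gen_span sV Y \<omega> sM YM r w nn n =
     module.span sM ((\<Union>i<r. {star_right sM YM (w i) a k | a k.
         a \<in> Vdeg sV Y \<omega> (int k) \<and> int k \<le> int n - int (nn i)}) \<union> OM sV Y \<omega> sM YM)"

end

theory Submission
  imports Defs "HOL-Computational_Algebra.Polynomial"
begin

text \<open>
  Write \<open>Res a N p v\<close> for \<open>Res\<^sub>z Y\<^sub>M(a,z) v p(z) z\<^sup>-\<^sup>N\<close>, so that for \<open>a\<close> of weight \<open>k\<close>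
  the product \<open>a * v\<close> is \<open>Res a 1 (1 + z)\<^sup>k v\<close> and the generators of \<open>O(M)\<close> are the
  \<open>Res a 2 (1 + z)\<^sup>k v\<close>. Since \<open>L(-1)\<close> acts as \<open>d/dz\<close>, induction on \<open>N\<close> shows that
  \<open>Res a N (1 + z)\<^sup>k v \<in> O(M)\<close> for all \<open>N \<ge> 2\<close>. The Borcherds identity with \<open>k = -1\<close> writes
  \<open>a * Res b P (1 + z)\<^sup>l v\<close> as a combination of the \<open>Res (a\<^sub>t\<^sub>-\<^sub>1 b) P (1 + z)\<^sup>k\<^sup>+\<^sup>l\<^sup>-\<^sup>t v\<close>
  plus terms with poles of order at least 2. Hence \<open>O(M)\<close> is stable under \<open>a *\<close>, and
  \<open>a * (b * w\<^sub>i)\<close> lies in the span of the \<open>(a\<^sub>t\<^sub>-\<^sub>1 b) * w\<^sub>i\<close> and \<open>O(M)\<close>.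

  Strong generation then gives \<open>M(d) \<subseteq> A(V)\<^sub>d\<^sub>-\<^sub>n\<^sub>1 * w\<^sub>1 + \<dots> + O(M)\<close> by induction on \<open>d\<close>:
  a word \<open>a\<^sub>-\<^sub>n y\<close> differs from \<open>a * y\<close> (for \<open>n = 1\<close>) or from an element of \<open>O(M)\<close>
  (for \<open>n \<ge> 2\<close>) by modes \<open>a\<^sub>j\<^sub>-\<^sub>n y\<close>, \<open>j \<ge> 1\<close>, of lower degree. The same holds for the right
  products, because \<open>a * w\<^sub>i - w\<^sub>i * a\<close> is a combination of modes \<open>a\<^sub>j\<^sub>-\<^sub>1 w\<^sub>i\<close>, \<open>j \<ge> 1\<close>,
  of lower degree.
\<close>

lemma ibinom_of_nat: "ibinom (int k) i = of_nat (k choose i)"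
  by (simp add: ibinom_def binomial_gbinomial)

lemma ibinom_0_right [simp]: "ibinom m 0 = 1"
  by (simp add: ibinom_def)

lemma ibinom_minus_one: "ibinom (-1) i = (-1) ^ i"
proof -
  have "ibinom (-1) i = (-1) ^ i * (of_nat i gchoose i)"
    unfolding ibinom_def by (subst gbinomial_negated_upper) simp
  then show ?thesis by (simp add: binomial_gbinomial[symmetric])
qed

lemma ibinom_minus_two: "ibinom (-2) i = (-1) ^ i * of_nat (i + 1)"
proof -
  have "ibinom (-2) i = (-1) ^ i * ((of_nat i + 1) gchoose i)"
    unfolding ibinom_def by (subst gbinomial_negated_upper) (simp add: algebra_simps)
  also have "(of_nat i + 1 :: complex) gchoose i = of_nat (Suc i choose i)"
    using binomial_gbinomial[of "Suc i" i, where 'a=complex] by (simp add: add.commute)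
  finally show ?thesis by (simp add: binomial_Suc_n)
qed

lemma sum_lessThan_if_int_eq:
  "(\<Sum>i<N. if int i = j then x else 0) = (if 0 \<le> j \<and> j < int N then x else 0)"
proof (cases "0 \<le> j")
  case True
  then have "(\<Sum>i<N. if int i = j then x else 0) = (\<Sum>i<N. if i = nat j then x else 0)"
    by (intro sum.cong) auto
  then show ?thesis using True by auto
qed simp

lemma sum_swap3:
  "(\<Sum>x\<in>A. \<Sum>y\<in>B. \<Sum>z\<in>C. f x y z) = (\<Sum>z\<in>C. \<Sum>x\<in>A. \<Sum>y\<in>B. f x y z)"
  by (subst sum.swap) (intro sum.cong refl sum.swap)

lemma coeff_one_plus_X_power:
  "coeff ([:1, 1:] ^ k) i = (of_nat (k choose i) :: 'a::comm_semiring_1)"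
  by (cases "i \<le> k") (simp_all add: coeff_linear_poly_power coeff_eq_0 degree_linear_power binomial_eq_0)

lemma sum_choose_choose_power:
  fixes x :: "'a::comm_ring_1"
  assumes "t \<le> k"
  shows "(\<Sum>m\<le>k. of_nat (k choose m) * of_nat (m choose t) * x ^ (m - t))
       = of_nat (k choose t) * (1 + x) ^ (k - t)"
proof -
  have "(\<Sum>m\<le>k. of_nat (k choose m) * of_nat (m choose t) * x ^ (m - t))
      = (\<Sum>m\<in>{t..k}. of_nat (k choose m) * of_nat (m choose t) * x ^ (m - t))"
    by (rule sum.mono_neutral_right) (auto simp: binomial_eq_0)
  also have "\<dots> = (\<Sum>j\<le>k - t. of_nat (k choose (j + t)) * of_nat ((j + t) choose t) * x ^ j)"
    by (rule sum.reindex_bij_witness[where j="\<lambda>m. m - t" and i="\<lambda>j. j + t"]) (use assms in auto)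
  also have "\<dots> = (\<Sum>j\<le>k - t. of_nat (k choose t) * (of_nat ((k - t) choose j) * x ^ j))"
  proof (rule sum.cong[OF refl])
    fix j assume "j \<in> {..k - t}"
    then have "(k choose (j + t)) * ((j + t) choose t) = (k choose t) * ((k - t) choose j)"
      using choose_mult[of t "j + t" k] assms by simp
    then show "of_nat (k choose (j + t)) * of_nat ((j + t) choose t) * x ^ j
        = of_nat (k choose t) * (of_nat ((k - t) choose j) * x ^ j)"
      by (metis mult.assoc of_nat_mult)
  qed
  also have "\<dots> = of_nat (k choose t) * (x + 1) ^ (k - t)"
    by (simp add: sum_distrib_left binomial_ring[of x 1])
  finally show ?thesis by (simp add: add.commute)
qed

text \<open>The polynomial \<open>(1 + z)\<^sup>l \<cdot> (d/dz)\<^sup>t (1 + z)\<^sup>k / t!\<close>, expanded in monomials.\<close>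
lemma sum_monom_choose_choose:
  "(\<Sum>m\<le>k. \<Sum>q\<le>l. smult (of_nat (k choose m) * of_nat (l choose q) * of_nat (m choose t))
        (monom 1 (m + q - t)))
   = smult (of_nat (k choose t)) ([:1, 1:] ^ (k + l - t) :: 'a::{ring_char_0, idom} poly)"
proof (rule poly_ext)
  fix x :: 'a
  show "poly (\<Sum>m\<le>k. \<Sum>q\<le>l. smult (of_nat (k choose m) * of_nat (l choose q) * of_nat (m choose t))
          (monom 1 (m + q - t))) x
      = poly (smult (of_nat (k choose t)) ([:1, 1:] ^ (k + l - t))) x"
  proof (cases "t \<le> k")
    case True
    have "poly (\<Sum>m\<le>k. \<Sum>q\<le>l. smult (of_nat (k choose m) * of_nat (l choose q) * of_nat (m choose t))
            (monom 1 (m + q - t))) x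
        = (\<Sum>m\<le>k. \<Sum>q\<le>l. (of_nat (k choose m) * of_nat (m choose t) * x ^ (m - t))
            * (of_nat (l choose q) * x ^ q))"
      unfolding poly_sum poly_smult poly_monom
    proof (intro sum.cong refl)
      fix m q
      show "of_nat (k choose m) * of_nat (l choose q) * of_nat (m choose t) * (1 * x ^ (m + q - t))
          = of_nat (k choose m) * of_nat (m choose t) * x ^ (m - t) * (of_nat (l choose q) * x ^ q)"
        by (cases "t \<le> m") (simp_all add: power_add[symmetric] algebra_simps)
    qed
    also have "\<dots> = (\<Sum>m\<le>k. of_nat (k choose m) * of_nat (m choose t) * x ^ (m - t))
        * (\<Sum>q\<le>l. of_nat (l choose q) * x ^ q)"
      by (simp add: sum_product)
    also have "\<dots> = of_nat (k choose t) * (1 + x) ^ (k - t) * (x + 1) ^ l"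
      by (simp add: sum_choose_choose_power[OF True] binomial_ring[of x 1])
    finally show ?thesis
      using True by (simp add: power_add[symmetric] mult.assoc add.commute)
  qed (auto simp: poly_sum binomial_eq_0 intro!: sum.neutral)
qed

lemma one_plus_X_power_Suc_identity:
  fixes c :: "'a::{idom, ring_char_0}"
  shows "smult c ([:1, 1:] ^ Suc k) - pCons 0 (pderiv ([:1, 1:] ^ Suc k))
       = smult c ([:1, 1:] ^ k) + pCons 0 (smult (c - of_nat (Suc k)) ([:1, 1:] ^ k))"
proof -
  have "pderiv ([:1, 1:] ^ Suc k) = smult (of_nat (Suc k)) ([:1, 1:] ^ k :: 'a poly)"
    by (subst pderiv_power_Suc) (simp add: pderiv_pCons)
  then show ?thesis
    by (intro poly_ext) (simp add: algebra_simps)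
qed

lemma (in module_hom) image_span_subset:
  "m2.subspace T \<Longrightarrow> f ` S \<subseteq> T \<Longrightarrow> f ` m1.span S \<subseteq> T"
  by (metis span_image m2.span_minimal)

lemma (in vector_space) span_Int_homogeneous:
  assumes subspace_G: "\<And>n. subspace (G n)"
    and independent_G: "\<And>F f. finite F \<Longrightarrow> \<forall>n\<in>F. f n \<in> G n \<Longrightarrow> sum f F = 0 \<Longrightarrow> \<forall>n\<in>F. f n = 0"
    and v: "v \<in> span W" and W: "\<forall>x\<in>W. \<exists>e. x \<in> G e" and vd: "v \<in> G d"
  shows "v \<in> span (W \<inter> G d)"
proof -
  obtain T c where T: "finite T" "T \<subseteq> W" and v_eq: "v = (\<Sum>x\<in>T. scale (c x) x)"
    using v unfolding span_explicit by blast
  define deg where "deg x = (SOME e. x \<in> G e)" for x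
  have deg: "x \<in> G (deg x)" if "x \<in> W" for x
    unfolding deg_def using W that by (metis someI_ex)
  define F where "F = insert d (deg ` T)"
  define f where "f e = (\<Sum>x\<in>{x\<in>T. deg x = e}. scale (c x) x) - (if e = d then v else 0)" for e
  have "finite F"
    using T unfolding F_def by simp
  moreover have "\<forall>e\<in>F. f e \<in> G e"
    unfolding f_def using deg T vd subspace_G
    by (auto intro!: subspace_diff subspace_sum subspace_scale simp: subspace_0)
  moreover have "(\<Sum>e\<in>F. \<Sum>x\<in>{x\<in>T. deg x = e}. scale (c x) x) = (\<Sum>x\<in>T. scale (c x) x)"
    by (rule sum.group) (use T in \<open>auto simp: F_def\<close>)
  then have "sum f F = 0"
    using \<open>finite F\<close> by (simp add: f_def sum_subtractf v_eq F_def)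
  ultimately have "f d = 0"
    using independent_G unfolding F_def by blast
  then have "v = (\<Sum>x\<in>{x\<in>T. deg x = d}. scale (c x) x)"
    unfolding f_def by simp
  also have "\<dots> \<in> span (W \<inter> G d)"
    using deg T by (intro span_sum span_scale span_base) auto
  finally show ?thesis .
qed

lemma borcherdsD:
  assumes "borcherds Y s YM"
    and "\<And>i. N \<le> i \<Longrightarrow> Y a (k + int i) b = 0" "\<And>i. N \<le> i \<Longrightarrow> YM b (n + int i) v = 0"
    and "\<And>i. N \<le> i \<Longrightarrow> YM a (m + int i) v = 0"
  shows "(\<Sum>i<N. s (ibinom m i) (YM (Y a (k + int i) b) (m + n - int i) v))
       = (\<Sum>i<N. s ((-1) ^ i * ibinom k i)
             (YM a (m + k - int i) (YM b (n + int i) v)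
              - s ((-1) ^ nat \<bar>k\<bar>) (YM b (n + k - int i) (YM a (m + int i) v))))"
  using assms(1)[unfolded borcherds_def, rule_format, of N a k b n v m] assms(2-) by blast

locale vertex_module =
  fixes sV :: "complex \<Rightarrow> 'v::ab_group_add \<Rightarrow> 'v" and Y :: "('v,'v) vop"
    and vac \<omega> :: 'v and c :: complex
    and sM :: "complex \<Rightarrow> 'm::ab_group_add \<Rightarrow> 'm" and YM :: "('v,'m) vop"
  assumes VOA: "is_VOA sV Y vac \<omega> c"
    and weak_M: "weak_module sV Y vac sM YM"
begin

abbreviation V_wt :: "int \<Rightarrow> 'v set" where
  "V_wt k \<equiv> Vdeg sV Y \<omega> k"

lemma weak_V: "weak_module sV Y vac sV Y"
  using VOA unfolding is_VOA_def by blast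

sublocale M: vector_space sM
  using weak_M unfolding weak_module_def by blast

sublocale V: vector_space sV
  using VOA unfolding is_VOA_def by blast

lemma YM_hom: "module_hom sM sM (YM a n)"
  using weak_M unfolding weak_module_def module_hom_iff_linear by blast

lemma Y_hom: "module_hom sV sV (Y a n)"
  using weak_V unfolding weak_module_def module_hom_iff_linear by blast

lemma Y_left_hom: "module_hom sV sV (\<lambda>a. Y a n b)"
  using weak_V unfolding weak_module_def module_hom_iff_linear by blast

lemmas YM_add = module_hom.add[OF YM_hom]
  and YM_scale = module_hom.scale[OF YM_hom]
  and YM_zero = module_hom.zero[OF YM_hom]
  and YM_sum = module_hom.sum[OF YM_hom]
  and Y_scale = module_hom.scale[OF Y_hom]
  and Y_scale_left = module_hom.scale[OF Y_left_hom]

lemma YM_eventually_zero: "\<exists>N. \<forall>i\<ge>N. YM a (n + int i) v = 0"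
proof -
  obtain K where "\<forall>m\<ge>K. YM a m v = 0"
    using weak_M unfolding weak_module_def by blast
  then show ?thesis by (intro exI[of _ "nat (K - n)"]) auto
qed

lemma Y_eventually_zero: "\<exists>N. \<forall>i\<ge>N. Y a (n + int i) b = 0"
proof -
  obtain K where "\<forall>m\<ge>K. Y a m b = 0"
    using weak_V unfolding weak_module_def by blast
  then show ?thesis by (intro exI[of _ "nat (K - n)"]) auto
qed

lemma YM_vac: "YM vac n v = (if n = -1 then v else 0)"
  using weak_M unfolding weak_module_def by blast

lemma borcherds_M: "borcherds Y sM YM"
  using weak_M unfolding weak_module_def by blast

lemma borcherds_V: "borcherds Y sV Y"
  using weak_V unfolding weak_module_def by blast

lemma Y_vac: "Y a (-1) vac = a" "n \<ge> 0 \<Longrightarrow> Y a n vac = 0"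
  using VOA unfolding is_VOA_def by blast+

lemma omega_wt: "\<omega> \<in> V_wt 2"
  using VOA unfolding is_VOA_def by blast

lemma V_wt_iff: "a \<in> V_wt k \<longleftrightarrow> Y \<omega> 1 a = sV (of_int k) a"
  by (simp add: Vdeg_def Lop_def)

lemma vac_wt: "vac \<in> V_wt 0"
  by (simp add: V_wt_iff Y_vac)

text \<open>\<open>Y \<omega> 0\<close> is \<open>L(-1)\<close>.\<close>
lemma Y_L_minus_one: "Y (Y \<omega> 0 a) n = (\<lambda>b. sV (- of_int n) (Y a (n - 1) b))"
  using VOA unfolding is_VOA_def Lop_def by simp

lemma L_minus_one_eq: "Y \<omega> 0 a = Y a (-2) vac"
  using fun_cong[OF Y_L_minus_one[of a "-1"], of vac] by (simp add: Y_vac)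

lemma YM_L_minus_one: "YM (Y \<omega> 0 a) n v = sM (- of_int n) (YM a (n - 1) v)"
proof -
  obtain Na where Na: "\<forall>i\<ge>Na. YM a (0 + int i) v = 0"
    using YM_eventually_zero by blast
  define N where "N = Na + nat \<bar>n\<bar> + 2"
  have "(\<Sum>i<N. sM (ibinom 0 i) (YM (Y a (-2 + int i) vac) (0 + n - int i) v))
      = (\<Sum>i<N. sM ((-1) ^ i * ibinom (-2) i)
           (YM a (0 + -2 - int i) (YM vac (n + int i) v)
            - sM ((-1) ^ nat \<bar>-2::int\<bar>) (YM vac (n + -2 - int i) (YM a (0 + int i) v))))"
    by (rule borcherdsD[OF borcherds_M]) (use Na in \<open>auto simp: N_def Y_vac YM_vac\<close>)
  moreover have "(\<Sum>i<N. sM (ibinom 0 i) (YM (Y a (-2 + int i) vac) (0 + n - int i) v))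
      = YM (Y \<omega> 0 a) n v"
    by (subst sum.remove[of _ 0]) (auto simp: N_def ibinom_of_nat[of 0, simplified] L_minus_one_eq intro!: sum.neutral)
  moreover have "(\<Sum>i<N. sM ((-1) ^ i * ibinom (-2) i)
           (YM a (0 + -2 - int i) (YM vac (n + int i) v)
            - sM ((-1) ^ nat \<bar>-2::int\<bar>) (YM vac (n + -2 - int i) (YM a (0 + int i) v))))
      = (\<Sum>i<N. if int i = -1 - n then sM (- of_int n) (YM a (n - 1) v) else 0)
        - (\<Sum>i<N. if int i = n - 1 then sM (of_int n) (YM a (n - 1) v) else 0)"
    unfolding sum_subtractf[symmetric]
  proof (intro sum.cong refl)
    fix i
    have "(-1) ^ i * ibinom (-2) i = (of_int (int i + 1) :: complex)"
      by (simp add: ibinom_minus_two flip: power_mult_distrib)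
    then have coeff: "int i = -1 - n \<Longrightarrow> (-1) ^ i * ibinom (-2) i = - of_int n"
      "int i = n - 1 \<Longrightarrow> (-1) ^ i * ibinom (-2) i = of_int n"
      by (simp_all del: of_int_add)
    show "sM ((-1) ^ i * ibinom (-2) i)
           (YM a (0 + -2 - int i) (YM vac (n + int i) v)
            - sM ((-1) ^ nat \<bar>-2::int\<bar>) (YM vac (n + -2 - int i) (YM a (0 + int i) v)))
        = (if int i = -1 - n then sM (- of_int n) (YM a (n - 1) v) else 0)
          - (if int i = n - 1 then sM (of_int n) (YM a (n - 1) v) else 0)"
      by (auto simp: coeff YM_vac YM_zero M.scale_right_diff_distrib M.scale_minus_left)
  qed
  ultimately show ?thesis
    by (auto simp: sum_lessThan_if_int_eq N_def)
qed

lemma Y_wt: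
  assumes a: "a \<in> V_wt k" and b: "b \<in> V_wt l"
  shows "Y a n b \<in> V_wt (k + l - n - 1)"
proof -
  obtain N1 where N1: "\<forall>i\<ge>N1. Y \<omega> (0 + int i) a = 0" using Y_eventually_zero by blast
  obtain N2 where N2: "\<forall>i\<ge>N2. Y a (n + int i) b = 0" using Y_eventually_zero by blast
  obtain N3 where N3: "\<forall>i\<ge>N3. Y \<omega> (1 + int i) b = 0" using Y_eventually_zero by blast
  define N where "N = N1 + N2 + N3 + 2"
  have "(\<Sum>i<N. sV (ibinom 1 i) (Y (Y \<omega> (0 + int i) a) (1 + n - int i) b))
      = (\<Sum>i<N. sV ((-1) ^ i * ibinom 0 i)
           (Y \<omega> (1 + 0 - int i) (Y a (n + int i) b)
            - sV ((-1) ^ nat \<bar>0::int\<bar>) (Y a (n + 0 - int i) (Y \<omega> (1 + int i) b))))"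
    by (rule borcherdsD[OF borcherds_V]) (use N1 N2 N3 in \<open>auto simp: N_def\<close>)
  moreover have "(\<Sum>i<N. sV (ibinom 1 i) (Y (Y \<omega> (0 + int i) a) (1 + n - int i) b))
      = (\<Sum>i\<in>{0, 1}. sV (ibinom 1 i) (Y (Y \<omega> (0 + int i) a) (1 + n - int i) b))"
    by (rule sum.mono_neutral_right)
      (auto simp: N_def ibinom_of_nat[of 1, simplified] binomial_eq_0)
  moreover have "(\<Sum>i<N. sV ((-1) ^ i * ibinom 0 i)
           (Y \<omega> (1 + 0 - int i) (Y a (n + int i) b)
            - sV ((-1) ^ nat \<bar>0::int\<bar>) (Y a (n + 0 - int i) (Y \<omega> (1 + int i) b))))
      = Y \<omega> 1 (Y a n b) - Y a n (Y \<omega> 1 b)"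
    by (subst sum.remove[of _ 0]) (auto simp: N_def ibinom_of_nat[of 0, simplified] intro!: sum.neutral)
  ultimately have "Y \<omega> 1 (Y a n b) = Y (Y \<omega> 0 a) (1 + n) b + Y (Y \<omega> 1 a) n b + Y a n (Y \<omega> 1 b)"
    by (simp add: ibinom_of_nat[of 1, simplified] eq_diff_eq)
  also have "\<dots> = sV (- of_int (1 + n) + of_int k + of_int l) (Y a n b)"
    using a b by (simp add: V_wt_iff Y_L_minus_one Y_scale Y_scale_left V.scale_left_distrib)
  finally show ?thesis
    by (simp add: V_wt_iff algebra_simps)
qed

lemma Y_wt_nat:
  assumes "a \<in> V_wt (int k)" "b \<in> V_wt (int l)" "t \<le> k + l"
  shows "Y a (int t - 1) b \<in> V_wt (int (k + l - t))"
proof -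
  have "int k + int l - (int t - 1) - 1 = int (k + l - t)"
    using assms(3) by simp
  then show ?thesis
    using Y_wt[OF assms(1,2), of "int t - 1"] by simp
qed

lemma L_minus_one_wt: "a \<in> V_wt (int k) \<Longrightarrow> Y \<omega> 0 a \<in> V_wt (int (Suc k))"
  using Y_wt[OF omega_wt, of a "int k" 0] by simp

definition Res :: "'v \<Rightarrow> int \<Rightarrow> complex poly \<Rightarrow> 'm \<Rightarrow> 'm" where
  "Res a N p v = (\<Sum>i\<le>degree p. sM (coeff p i) (YM a (int i - N) v))"

lemma Res_eq_sum_lessThan:
  "degree p < D \<Longrightarrow> Res a N p v = (\<Sum>i<D. sM (coeff p i) (YM a (int i - N) v))"
  unfolding Res_def by (rule sum.mono_neutral_right[symmetric]) (auto simp: coeff_eq_0)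

lemma Res_add: "Res a N (p + q) v = Res a N p v + Res a N q v"
proof -
  define D where "D = Suc (max (degree p) (degree q))"
  have "degree (p + q) < D" "degree p < D" "degree q < D"
    using degree_add_le_max[of p q] unfolding D_def by linarith+
  then show ?thesis
    by (simp add: Res_eq_sum_lessThan[of _ D] M.scale_left_distrib sum.distrib)
qed

lemma Res_smult: "Res a N (smult z p) v = sM z (Res a N p v)"
proof -
  have "degree (smult z p) < Suc (degree p)"
    using degree_smult_le[of z p] by linarith
  then show ?thesis
    by (simp add: Res_eq_sum_lessThan[of _ "Suc (degree p)"] M.scale_sum_right del: sum.lessThan_Suc)
qed

lemma Res_0: "Res a N 0 v = 0"
  by (simp add: Res_def)

lemma Res_sum: "Res a N (\<Sum>j\<in>A. p j) v = (\<Sum>j\<in>A. Res a N (p j) v)"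
  by (induction A rule: infinite_finite_induct) (simp_all add: Res_0 Res_add)

lemma Res_monom: "Res a N (monom z n) v = sM z (YM a (int n - N) v)"
proof -
  have "Res a N (monom z n) v = (\<Sum>i<Suc n. sM (coeff (monom z n) i) (YM a (int i - N) v))"
    by (rule Res_eq_sum_lessThan) (simp add: degree_monom_le le_imp_less_Suc)
  also have "\<dots> = sM z (YM a (int n - N) v)"
    by (subst sum.remove[of _ n]) auto
  finally show ?thesis .
qed

lemma Res_pCons_0: "Res a N (pCons 0 p) v = Res a (N - 1) p v"
proof -
  have "Res a N (pCons 0 p) v
      = (\<Sum>i<Suc (Suc (degree p)). sM (coeff (pCons 0 p) i) (YM a (int i - N) v))"
    by (rule Res_eq_sum_lessThan) (simp add: degree_pCons_le le_imp_less_Suc)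
  also have "\<dots> = (\<Sum>i<Suc (degree p). sM (coeff p i) (YM a (int (Suc i) - N) v))"
    by (subst sum.lessThan_Suc_shift) simp
  also have "\<dots> = Res a (N - 1) p v"
    by (subst Res_eq_sum_lessThan[of p "Suc (degree p)"]) (auto intro!: sum.cong simp: algebra_simps)
  finally show ?thesis .
qed

lemma Res_hom: "module_hom sM sM (Res a N p)"
  by unfold_locales
    (simp_all add: Res_def YM_add YM_scale M.scale_right_distrib sum.distrib M.scale_sum_right mult.commute)

lemma Res_one_plus_X_power:
  "Res a N ([:1, 1:] ^ k) v = (\<Sum>i\<le>k. sM (of_nat (k choose i)) (YM a (int i - N) v))"
  by (simp add: Res_def degree_linear_power coeff_one_plus_X_power)

lemma star_left_eq_Res: "star_left sM YM a k v = Res a 1 ([:1, 1:] ^ k) v"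
  by (simp add: star_left_def Res_one_plus_X_power ibinom_of_nat)

lemma circ_elt_eq_Res: "circ_elt sM YM a k v = Res a 2 ([:1, 1:] ^ k) v"
  by (simp add: circ_elt_def Res_one_plus_X_power ibinom_of_nat)

text \<open>Integration by parts, since \<open>Y\<^sub>M(L(-1)a, z) = d/dz Y\<^sub>M(a, z)\<close>.\<close>
lemma Res_L_minus_one:
  "Res (Y \<omega> 0 a) N p v = Res a (N + 1) (smult (of_int N) p - pCons 0 (pderiv p)) v"
proof -
  let ?q = "smult (of_int N) p - pCons 0 (pderiv p)"
  have coeff_q: "coeff ?q i = (of_int N - of_nat i) * coeff p i" for i
    by (cases i) (simp_all add: coeff_pderiv algebra_simps)
  have "\<forall>i>degree p. coeff ?q i = 0"
    by (simp only: coeff_q) (auto simp: coeff_eq_0)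
  then have "degree ?q \<le> degree p"
    by (rule degree_le)
  then have "Res a (N + 1) ?q v = (\<Sum>i<Suc (degree p). sM (coeff ?q i) (YM a (int i - (N + 1)) v))"
    by (intro Res_eq_sum_lessThan) simp
  also have "\<dots> = (\<Sum>i<Suc (degree p). sM (coeff p i) (YM (Y \<omega> 0 a) (int i - N) v))"
    by (intro sum.cong refl) (subst coeff_q, simp add: YM_L_minus_one algebra_simps)
  also have "\<dots> = Res (Y \<omega> 0 a) N p v"
    by (intro Res_eq_sum_lessThan[symmetric]) simp
  finally show ?thesis ..
qed

lemma Res_L_minus_one_one_plus_X_power:
  "Res (Y \<omega> 0 a) N ([:1, 1:] ^ Suc k) v
   = sM (of_int N) (Res a (N + 1) ([:1, 1:] ^ k) v)
     + sM (of_int N - of_nat (Suc k)) (Res a N ([:1, 1:] ^ k) v)"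
  unfolding Res_L_minus_one one_plus_X_power_Suc_identity
  by (simp add: Res_add Res_smult Res_pCons_0)

abbreviation O_M :: "'m set" where
  "O_M \<equiv> OM sV Y \<omega> sM YM"

lemma subspace_O_M: "M.subspace O_M"
  unfolding OM_def by (rule M.subspace_span)

lemma circ_elt_in_O_M: "a \<in> V_wt (int k) \<Longrightarrow> circ_elt sM YM a k v \<in> O_M"
  unfolding OM_def by (rule M.span_base) blast

lemma Res_in_O_M:
  "2 \<le> N \<Longrightarrow> a \<in> V_wt (int k) \<Longrightarrow> Res a N ([:1, 1:] ^ k) v \<in> O_M"
proof (induction N arbitrary: a k rule: int_ge_induct)
  case base
  then show ?case
    using circ_elt_in_O_M by (simp add: circ_elt_eq_Res)
next
  case (step N)
  have "Res (Y \<omega> 0 a) N ([:1, 1:] ^ Suc k) v \<in> O_M"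
    using step.prems by (intro step.IH L_minus_one_wt)
  moreover have "Res a N ([:1, 1:] ^ k) v \<in> O_M"
    using step.prems by (rule step.IH)
  ultimately have "sM (of_int N) (Res a (N + 1) ([:1, 1:] ^ k) v) \<in> O_M"
    unfolding Res_L_minus_one_one_plus_X_power
    by (metis add_diff_cancel_right' subspace_O_M M.subspace_diff M.subspace_scale)
  then have "sM (inverse (of_int N)) (sM (of_int N) (Res a (N + 1) ([:1, 1:] ^ k) v)) \<in> O_M"
    by (rule M.subspace_scale[OF subspace_O_M])
  then show ?case
    using step.hyps by simp
qed

lemma Res_Res:
  "Res a A ([:1, 1:] ^ k) (Res b B ([:1, 1:] ^ l) v)
   = (\<Sum>m\<le>k. \<Sum>q\<le>l. sM (of_nat (k choose m) * of_nat (l choose q)) (YM a (int m - A) (YM b (int q - B) v)))"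
  unfolding Res_one_plus_X_power YM_sum YM_scale M.scale_sum_right M.scale_scale
  by (rule refl)

lemma Res_monom_choose:
  "Res e P (smult (z * of_nat (m choose t)) (monom 1 (m + q - t))) v
   = sM (z * of_nat (m choose t)) (YM e (int m + (int q - P) - int t) v)"
proof (cases "t \<le> m")
  case True
  then have "int (m + q - t) - P = int m + (int q - P) - int t" by simp
  then show ?thesis unfolding Res_smult Res_monom by (simp only:) simp
qed (simp add: Res_smult Res_0)

lemma borcherds_minus_one:
  assumes "\<And>i. N \<le> i \<Longrightarrow> Y a (int i - 1) b = 0" "\<And>i. N \<le> i \<Longrightarrow> YM b (n + int i) v = 0"
    and "\<And>i. N \<le> i \<Longrightarrow> YM a (m + int i) v = 0"
  shows "(\<Sum>t<N. sM (ibinom m t) (YM (Y a (int t - 1) b) (m + n - int t) v))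
       = (\<Sum>i<N. YM a (m - 1 - int i) (YM b (n + int i) v) + YM b (n - 1 - int i) (YM a (m + int i) v))"
proof -
  have "(\<Sum>i<N. sM (ibinom m i) (YM (Y a (-1 + int i) b) (m + n - int i) v))
     = (\<Sum>i<N. sM ((-1) ^ i * ibinom (-1) i)
         (YM a (m + -1 - int i) (YM b (n + int i) v)
          - sM ((-1) ^ nat \<bar>-1::int\<bar>) (YM b (n + -1 - int i) (YM a (m + int i) v))))"
    using assms by (intro borcherdsD[OF borcherds_M]) (simp_all add: add.commute)
  then show ?thesis
    by (simp add: ibinom_minus_one algebra_simps flip: power_mult_distrib)
qed

lemma sum_Res_one_plus_X_power_expand:
  "(\<Sum>t<N. sM (of_nat (k choose t)) (Res (e t) P ([:1, 1:] ^ (k + l - t)) v))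
   = (\<Sum>m\<le>k. \<Sum>q\<le>l. sM (of_nat (k choose m) * of_nat (l choose q))
        (\<Sum>t<N. sM (of_nat (m choose t)) (YM (e t) (int m + (int q - P) - int t) v)))"
proof -
  have "(\<Sum>t<N. sM (of_nat (k choose t)) (Res (e t) P ([:1, 1:] ^ (k + l - t)) v))
      = (\<Sum>t<N. \<Sum>m\<le>k. \<Sum>q\<le>l. sM (of_nat (k choose m) * of_nat (l choose q) * of_nat (m choose t))
           (YM (e t) (int m + (int q - P) - int t) v))"
    by (simp only: Res_smult[symmetric] sum_monom_choose_choose[symmetric] Res_sum Res_monom_choose)
  also have "\<dots> = (\<Sum>m\<le>k. \<Sum>q\<le>l. \<Sum>t<N. sM (of_nat (k choose m) * of_nat (l choose q) * of_nat (m choose t))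
           (YM (e t) (int m + (int q - P) - int t) v))"
    by (rule sum_swap3[symmetric])
  finally show ?thesis
    by (simp add: M.scale_sum_right M.scale_scale)
qed

text \<open>The Borcherds identity with \<open>k = -1\<close>, integrated against \<open>(1 + z)\<^sup>k\<close> and \<open>(1 + z)\<^sup>l\<close>.\<close>
lemma Res_iterate:
  "\<exists>N>0. (\<Sum>t<N. sM (of_nat (k choose t)) (Res (Y a (int t - 1) b) P ([:1, 1:] ^ (k + l - t)) v))
      = (\<Sum>i<N. Res a (1 + int i) ([:1, 1:] ^ k) (Res b (P - int i) ([:1, 1:] ^ l) v)
               + Res b (P + 1 + int i) ([:1, 1:] ^ l) (Res a (- int i) ([:1, 1:] ^ k) v))"
proof -
  obtain Na where Na: "\<forall>i\<ge>Na. Y a (-1 + int i) b = 0" using Y_eventually_zero by blast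
  obtain Nb where Nb: "\<forall>i\<ge>Nb. YM b (- P + int i) v = 0" using YM_eventually_zero by blast
  obtain Nc where Nc: "\<forall>i\<ge>Nc. YM a (0 + int i) v = 0" using YM_eventually_zero by blast
  define N where "N = Suc (Na + Nb + Nc)"
  have b_trunc: "YM b (int q - P + int i) v = 0" if "N \<le> i" for i q
    using Nb[rule_format, of "i + q"] that by (simp add: N_def algebra_simps)
  have a_trunc: "YM a (int m + int i) v = 0" if "N \<le> i" for i m
    using Nc[rule_format, of "i + m"] that by (simp add: N_def algebra_simps)
  have borcherds_m_q:
    "(\<Sum>t<N. sM (of_nat (m choose t)) (YM (Y a (int t - 1) b) (int m + (int q - P) - int t) v))
     = (\<Sum>i<N. YM a (int m - 1 - int i) (YM b (int q - P + int i) v)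
              + YM b (int q - P - 1 - int i) (YM a (int m + int i) v))" for m q
    using borcherds_minus_one[of N a b "int q - P" v "int m"] Na b_trunc a_trunc
    by (simp add: N_def ibinom_of_nat algebra_simps)
  have first: "(\<Sum>m\<le>k. \<Sum>q\<le>l. \<Sum>i<N.
        sM (of_nat (k choose m) * of_nat (l choose q)) (YM a (int m - 1 - int i) (YM b (int q - P + int i) v)))
      = (\<Sum>i<N. Res a (1 + int i) ([:1, 1:] ^ k) (Res b (P - int i) ([:1, 1:] ^ l) v))"
    unfolding Res_Res by (subst sum_swap3) (simp add: algebra_simps)
  have second: "(\<Sum>m\<le>k. \<Sum>q\<le>l. \<Sum>i<N.
        sM (of_nat (k choose m) * of_nat (l choose q)) (YM b (int q - P - 1 - int i) (YM a (int m + int i) v)))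
      = (\<Sum>i<N. Res b (P + 1 + int i) ([:1, 1:] ^ l) (Res a (- int i) ([:1, 1:] ^ k) v))"
    unfolding Res_Res by (subst sum.swap, subst sum_swap3) (simp add: algebra_simps)
  have "(\<Sum>t<N. sM (of_nat (k choose t)) (Res (Y a (int t - 1) b) P ([:1, 1:] ^ (k + l - t)) v))
      = (\<Sum>m\<le>k. \<Sum>q\<le>l. \<Sum>i<N.
           sM (of_nat (k choose m) * of_nat (l choose q)) (YM a (int m - 1 - int i) (YM b (int q - P + int i) v))
           + sM (of_nat (k choose m) * of_nat (l choose q)) (YM b (int q - P - 1 - int i) (YM a (int m + int i) v)))"
    by (simp only: sum_Res_one_plus_X_power_expand borcherds_m_q M.scale_sum_right M.scale_right_distrib)
  also have "\<dots> = (\<Sum>i<N. Res a (1 + int i) ([:1, 1:] ^ k) (Res b (P - int i) ([:1, 1:] ^ l) v)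
               + Res b (P + 1 + int i) ([:1, 1:] ^ l) (Res a (- int i) ([:1, 1:] ^ k) v))"
    by (simp only: sum.distrib first second)
  finally show ?thesis
    unfolding N_def using zero_less_Suc by blast
qed

lemma star_left_hom: "module_hom sM sM (star_left sM YM a k)"
proof -
  have "star_left sM YM a k = Res a 1 ([:1, 1:] ^ k)"
    by (rule ext) (rule star_left_eq_Res)
  then show ?thesis
    using Res_hom by simp
qed

lemma star_left_Res_in_subspace:
  assumes a: "a \<in> V_wt (int k)" and b: "b \<in> V_wt (int l)" and P: "1 \<le> P"
    and S: "M.subspace S" "O_M \<subseteq> S"
    and iterates: "\<And>t. t \<le> k \<Longrightarrow> Res (Y a (int t - 1) b) P ([:1, 1:] ^ (k + l - t)) v \<in> S"
  shows "star_left sM YM a k (Res b P ([:1, 1:] ^ l) v) \<in> S"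
proof -
  define A where "A i = Res a (1 + int i) ([:1, 1:] ^ k) (Res b (P - int i) ([:1, 1:] ^ l) v)" for i
  define B where "B i = Res b (P + 1 + int i) ([:1, 1:] ^ l) (Res a (- int i) ([:1, 1:] ^ k) v)" for i
  obtain N where "N > 0" and iterate:
    "(\<Sum>t<N. sM (of_nat (k choose t)) (Res (Y a (int t - 1) b) P ([:1, 1:] ^ (k + l - t)) v))
     = (\<Sum>i<N. A i + B i)"
    unfolding A_def B_def using Res_iterate by blast
  then obtain N' where N: "N = Suc N'"
    using gr0_implies_Suc by blast
  have "(\<Sum>t<N. sM (of_nat (k choose t)) (Res (Y a (int t - 1) b) P ([:1, 1:] ^ (k + l - t)) v)) \<in> S"
  proof (intro M.subspace_sum[OF S(1)])
    fix t
    show "sM (of_nat (k choose t)) (Res (Y a (int t - 1) b) P ([:1, 1:] ^ (k + l - t)) v) \<in> S"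
      using iterates M.subspace_scale[OF S(1)] M.subspace_0[OF S(1)]
      by (cases "t \<le> k") (auto simp: binomial_eq_0)
  qed
  moreover have B: "B i \<in> S" for i
    unfolding B_def using P S(2) by (intro subsetD[OF _ Res_in_O_M[OF _ b]]) auto
  moreover have "(\<Sum>i<N'. A (Suc i) + B (Suc i)) \<in> S"
    unfolding A_def using S(2) B
    by (intro M.subspace_sum[OF S(1)] M.subspace_add[OF S(1)] subsetD[OF _ Res_in_O_M[OF _ a]]) auto
  ultimately have "(\<Sum>i<N. A i + B i) - B 0 - (\<Sum>i<N'. A (Suc i) + B (Suc i)) \<in> S"
    unfolding iterate by (blast intro: M.subspace_diff[OF S(1)])
  also have "(\<Sum>i<N. A i + B i) - B 0 - (\<Sum>i<N'. A (Suc i) + B (Suc i)) = A 0"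
    unfolding N sum.lessThan_Suc_shift by simp
  finally show ?thesis
    by (simp add: A_def star_left_eq_Res)
qed

lemma star_left_O_M: "a \<in> V_wt (int k) \<Longrightarrow> x \<in> O_M \<Longrightarrow> star_left sM YM a k x \<in> O_M"
  unfolding OM_def
proof (rule subsetD[OF module_hom.image_span_subset[OF star_left_hom M.subspace_span] imageI])
  assume a: "a \<in> V_wt (int k)"
  show "star_left sM YM a k ` {circ_elt sM YM b l u | b l u. b \<in> V_wt (int l)}
      \<subseteq> M.span {circ_elt sM YM b l u | b l u. b \<in> V_wt (int l)}"
  proof clarify
    fix b l u assume b: "b \<in> V_wt (int l)"
    have "star_left sM YM a k (Res b 2 ([:1, 1:] ^ l) u) \<in> O_M"
      using a b by (intro star_left_Res_in_subspace subspace_O_M)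
        (auto simp: circ_elt_eq_Res[symmetric] intro!: circ_elt_in_O_M Y_wt_nat)
    then show "star_left sM YM a k (circ_elt sM YM b l u)
        \<in> M.span {circ_elt sM YM b l u | b l u. b \<in> V_wt (int l)}"
      by (simp add: circ_elt_eq_Res OM_def)
  qed
qed

end

locale admissible_module = vertex_module +
  fixes Mg
  assumes admissible: "admissible sV Y vac \<omega> sM YM Mg"
begin

lemma subspace_Mg: "M.subspace (Mg n)"
  using admissible[unfolded admissible_def, THEN conjunct2, THEN conjunct1] by blast

lemma Mg_independent:
  "finite F \<Longrightarrow> \<forall>n\<in>F. f n \<in> Mg n \<Longrightarrow> sum f F = 0 \<Longrightarrow> \<forall>n\<in>F. f n = 0"
  using admissible[unfolded admissible_def, THEN conjunct2, THEN conjunct2, THEN conjunct2, THEN conjunct1]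
  by blast

lemma YM_Mg_cases:
  "a \<in> V_wt k \<Longrightarrow> v \<in> Mg n \<Longrightarrow>
   (if 0 \<le> k - m - 1 + int n then YM a m v \<in> Mg (nat (k - m - 1 + int n)) else YM a m v = 0)"
  using admissible[unfolded admissible_def, THEN conjunct2, THEN conjunct2, THEN conjunct2, THEN conjunct2]
  by blast

lemma YM_Mg:
  "a \<in> V_wt k \<Longrightarrow> v \<in> Mg n \<Longrightarrow> 0 \<le> k - m - 1 + int n \<Longrightarrow> YM a m v \<in> Mg (nat (k - m - 1 + int n))"
  using YM_Mg_cases[of a k v n m] by simp

lemma YM_Mg_eq_0:
  "a \<in> V_wt k \<Longrightarrow> v \<in> Mg n \<Longrightarrow> k - m - 1 + int n < 0 \<Longrightarrow> YM a m v = 0"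
  using YM_Mg_cases[of a k v n m] by simp

lemma Mg_Int_eq_0: "x \<in> Mg d \<Longrightarrow> x \<in> Mg e \<Longrightarrow> d \<noteq> e \<Longrightarrow> x = 0"
  using Mg_independent[of "{d, e}" "\<lambda>n. if n = d then x else - x"]
  by (auto simp: M.subspace_neg[OF subspace_Mg])

lemma YM_in_lower_degrees:
  assumes "a \<in> V_wt k" "y \<in> Mg e" "k - m - 1 + int e < int d"
    and "M.subspace S" "\<And>e'. e' < d \<Longrightarrow> Mg e' \<subseteq> S"
  shows "YM a m y \<in> S"
proof (cases "0 \<le> k - m - 1 + int e")
  case True
  then have "YM a m y \<in> Mg (nat (k - m - 1 + int e))"
    using YM_Mg assms(1,2) by blast
  then show ?thesis
    using assms(3,5) True by (meson nat_less_iff subsetD)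
next
  case False
  then show ?thesis
    using YM_Mg_eq_0[OF assms(1,2)] M.subspace_0[OF assms(4)] by simp
qed

lemma strong_words_homogeneous:
  assumes "x \<in> strong_words sV Y \<omega> YM W" "\<forall>x\<in>W. \<exists>e. x \<in> Mg e"
  shows "\<exists>e. x \<in> Mg e"
  using assms(1)
proof (induction rule: strong_words.induct)
  case (step a k n x)
  then obtain e where "x \<in> Mg e" by blast
  then show ?case
    using YM_Mg[OF step(1), of x e "- n"] step(2,3) by auto
qed (use assms(2) in blast)

lemma span_strong_words_Int:
  "(\<forall>x\<in>W. \<exists>e. x \<in> Mg e) \<Longrightarrow> x \<in> M.span (strong_words sV Y \<omega> YM W) \<Longrightarrow> x \<in> Mg d
   \<Longrightarrow> x \<in> M.span (strong_words sV Y \<omega> YM W \<inter> Mg d)"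
  using M.span_Int_homogeneous[where G = Mg, OF subspace_Mg Mg_independent] strong_words_homogeneous by blast

end

locale strongly_generated_module = admissible_module +
  fixes r :: nat and w and nn :: "nat \<Rightarrow> nat"
  assumes strongly_generated: "strongly_generated sV Y \<omega> sM YM (w ` {..<r})"
    and w_Mg: "\<forall>i<r. w i \<in> Mg (nn i)"
begin

abbreviation "left_gens n \<equiv> \<Union>i<r. {star_left sM YM a k (w i) | a k.
  a \<in> V_wt (int k) \<and> int k \<le> int n - int (nn i)}"

abbreviation "right_gens n \<equiv> \<Union>i<r. {star_right sM YM (w i) a k | a k.
  a \<in> V_wt (int k) \<and> int k \<le> int n - int (nn i)}"

abbreviation "A_M n \<equiv> AM_filt sV Y \<omega> sM YM Mg n"
abbreviation "left_span n \<equiv> left_gen_span sV Y \<omega> sM YM r w nn n"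
abbreviation "right_span n \<equiv> right_gen_span sV Y \<omega> sM YM r w nn n"

lemma left_gensI:
  "i < r \<Longrightarrow> a \<in> V_wt (int k) \<Longrightarrow> k + nn i \<le> n \<Longrightarrow> star_left sM YM a k (w i) \<in> left_gens n"
  by (intro UN_I[where a = i] CollectI exI conjI) auto

lemma left_gensE:
  assumes "x \<in> left_gens n"
  obtains i a k where "i < r" "x = star_left sM YM a k (w i)" "a \<in> V_wt (int k)" "k + nn i \<le> n"
  using assms by fastforce

lemma right_gensI:
  "i < r \<Longrightarrow> a \<in> V_wt (int k) \<Longrightarrow> k + nn i \<le> n \<Longrightarrow> star_right sM YM (w i) a k \<in> right_gens n"
  by (intro UN_I[where a = i] CollectI exI conjI) auto

lemma right_gensE:
  assumes "x \<in> right_gens n"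
  obtains i a k where "i < r" "x = star_right sM YM (w i) a k" "a \<in> V_wt (int k)" "k + nn i \<le> n"
  using assms by fastforce

lemma left_span_eq: "left_span n = M.span (left_gens n \<union> O_M)"
  by (simp add: left_gen_span_def)

lemma right_span_eq: "right_span n = M.span (right_gens n \<union> O_M)"
  by (simp add: right_gen_span_def)

lemma A_M_eq: "A_M n = M.span ((\<Union>i\<le>n. Mg i) \<union> O_M)"
  by (simp add: AM_filt_def)

lemma subspace_left_span: "M.subspace (left_span n)"
  by (simp add: left_span_eq)

lemma subspace_right_span: "M.subspace (right_span n)"
  by (simp add: right_span_eq)

lemma subspace_A_M: "M.subspace (A_M n)"
  by (simp add: A_M_eq)

lemma left_gens_subset_left_span: "left_gens n \<subseteq> left_span n"
  unfolding left_span_eq by (rule subset_trans[OF Un_upper1 M.span_superset])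

lemma O_M_subset_left_span: "O_M \<subseteq> left_span n"
  unfolding left_span_eq by (rule subset_trans[OF Un_upper2 M.span_superset])

lemma right_gens_subset_right_span: "right_gens n \<subseteq> right_span n"
  unfolding right_span_eq by (rule subset_trans[OF Un_upper1 M.span_superset])

lemma O_M_subset_right_span: "O_M \<subseteq> right_span n"
  unfolding right_span_eq by (rule subset_trans[OF Un_upper2 M.span_superset])

lemma O_M_subset_A_M: "O_M \<subseteq> A_M n"
  unfolding A_M_eq by (rule subset_trans[OF Un_upper2 M.span_superset])

lemma Mg_subset_A_M: "e \<le> n \<Longrightarrow> Mg e \<subseteq> A_M n"
  unfolding A_M_eq by (rule subset_trans[OF _ M.span_superset]) auto

lemma left_span_mono: "e \<le> d \<Longrightarrow> left_span e \<subseteq> left_span d"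
  unfolding left_span_eq by (rule M.span_mono) fastforce

lemma right_span_mono: "e \<le> d \<Longrightarrow> right_span e \<subseteq> right_span d"
  unfolding right_span_eq by (rule M.span_mono) fastforce

lemma star_left_left_span:
  assumes a: "a \<in> V_wt (int k)" and y: "y \<in> left_span e"
  shows "star_left sM YM a k y \<in> left_span (e + k)"
proof -
  have "star_left sM YM a k ` (left_gens e \<union> O_M) \<subseteq> left_span (e + k)"
  proof (rule image_subsetI, elim UnE left_gensE)
    fix x i b l
    assume i: "i < r" and x: "x = star_left sM YM b l (w i)"
      and b: "b \<in> V_wt (int l)" and l: "l + nn i \<le> e"
    have "Res (Y a (int t - 1) b) 1 ([:1, 1:] ^ (k + l - t)) (w i) \<in> left_span (e + k)" if "t \<le> k" for t
    proof -
      have "star_left sM YM (Y a (int t - 1) b) (k + l - t) (w i) \<in> left_gens (e + k)"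
        using that i l by (intro left_gensI Y_wt_nat a b) auto
      then have "star_left sM YM (Y a (int t - 1) b) (k + l - t) (w i) \<in> left_span (e + k)"
        by (rule subsetD[OF left_gens_subset_left_span])
      then show ?thesis
        by (simp only: star_left_eq_Res)
    qed
    then have "star_left sM YM a k (Res b 1 ([:1, 1:] ^ l) (w i)) \<in> left_span (e + k)"
      using a b by (intro star_left_Res_in_subspace subspace_left_span O_M_subset_left_span) auto
    then show "star_left sM YM a k x \<in> left_span (e + k)"
      by (simp add: x star_left_eq_Res)
  next
    fix x
    assume "x \<in> O_M"
    then show "star_left sM YM a k x \<in> left_span (e + k)"
      using star_left_O_M[OF a] O_M_subset_left_span by blast
  qed
  then have "star_left sM YM a k ` M.span (left_gens e \<union> O_M) \<subseteq> left_span (e + k)"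
    by (rule module_hom.image_span_subset[OF star_left_hom subspace_left_span])
  moreover have "y \<in> M.span (left_gens e \<union> O_M)"
    using y by (simp only: left_span_eq)
  ultimately show ?thesis
    by blast
qed

lemma w_in_left_span:
  assumes i: "i < r" and d: "w i \<in> Mg d"
  shows "w i \<in> left_span d"
proof (cases "d = nn i")
  case True
  have "star_left sM YM vac 0 (w i) \<in> left_gens d"
    using i vac_wt True by (intro left_gensI) auto
  moreover have "star_left sM YM vac 0 (w i) = w i"
    by (simp add: star_left_def YM_vac)
  ultimately have "w i \<in> left_gens d"
    by (simp only:)
  then show ?thesis
    by (rule subsetD[OF left_gens_subset_left_span])
next
  case False
  then have "w i = 0"
    using Mg_Int_eq_0[OF d] w_Mg i by auto
  then show ?thesis
    using M.subspace_0[OF subspace_left_span] by simp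
qed

lemma mode_in_left_span:
  assumes a: "a \<in> V_wt (int k)" and n: "1 \<le> n" and y: "y \<in> Mg e" "y \<in> left_span e"
    and lower: "\<And>e'. e' < e + k + n - 1 \<Longrightarrow> Mg e' \<subseteq> left_span (e + k + n - 1)"
  shows "YM a (- int n) y \<in> left_span (e + k + n - 1)"
proof -
  let ?d = "e + k + n - 1"
  have "Res a (int n) ([:1, 1:] ^ k) y \<in> left_span ?d"
  proof (cases "n = 1")
    case True
    then show ?thesis
      using star_left_left_span[OF a y(2)] by (simp add: star_left_eq_Res)
  next
    case False
    then have "2 \<le> int n"
      using n by simp
    then show ?thesis
      using Res_in_O_M[OF _ a] O_M_subset_left_span by blast
  qed
  moreover have "(\<Sum>i\<in>{..k} - {0}. sM (of_nat (k choose i)) (YM a (int i - int n) y)) \<in> left_span ?d"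
    using n by (intro M.subspace_sum M.subspace_scale subspace_left_span
        YM_in_lower_degrees[OF a y(1) _ subspace_left_span lower]) auto
  ultimately have "Res a (int n) ([:1, 1:] ^ k) y
      - (\<Sum>i\<in>{..k} - {0}. sM (of_nat (k choose i)) (YM a (int i - int n) y)) \<in> left_span ?d"
    by (rule M.subspace_diff[OF subspace_left_span])
  then show ?thesis
    by (simp add: Res_one_plus_X_power sum.remove[of "{..k}" 0])
qed

lemma Mg_subset_left_span: "Mg d \<subseteq> left_span d"
proof (induction d rule: less_induct)
  case (less d)
  have lower: "Mg e \<subseteq> left_span d" if "e < d" for e
    using less[OF that] left_span_mono[of e d] that by auto
  have "x \<in> left_span d" if x: "x \<in> strong_words sV Y \<omega> YM (w ` {..<r})" and xd: "x \<in> Mg d" for x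
    using x
  proof cases
    case base
    then show ?thesis
      using w_in_left_span xd by blast
  next
    case (step a k n y)
    obtain e where e: "y \<in> Mg e"
      using strong_words_homogeneous[OF step(5)] w_Mg by blast
    have d': "x \<in> Mg (e + nat k + nat n - 1)"
      using YM_Mg[OF step(2) e, of "- n"] step(1,3,4) by (simp add: nat_add_distrib nat_diff_distrib ac_simps)
    show ?thesis
    proof (cases "d = e + nat k + nat n - 1")
      case True
      have "e < d"
        using True step(3,4) by linarith
      then have "y \<in> left_span e"
        using less.IH e by blast
      then have "YM a (- int (nat n)) y \<in> left_span d"
        unfolding True using step(2,3,4) e lower[unfolded True]
        by (intro mode_in_left_span) auto
      then show ?thesis
        using step(1,4) by simp
    qed (use Mg_Int_eq_0[OF xd d'] M.subspace_0[OF subspace_left_span] in auto)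
  qed
  moreover have "\<forall>x\<in>w ` {..<r}. \<exists>e. x \<in> Mg e"
    using w_Mg by blast
  ultimately show ?case
    using span_strong_words_Int strongly_generated
      M.span_minimal[OF _ subspace_left_span, of "strong_words sV Y \<omega> YM (w ` {..<r}) \<inter> Mg d"]
    unfolding strongly_generated_def by blast
qed

lemma left_gens_subset_right_span:
  assumes lower: "\<And>e. e < d \<Longrightarrow> Mg e \<subseteq> right_span d"
  shows "left_gens d \<subseteq> right_span d"
proof (rule subsetI, elim left_gensE)
  fix x i a k
  assume i: "i < r" and x: "x = star_left sM YM a k (w i)" and a: "a \<in> V_wt (int k)"
    and k: "k + nn i \<le> d"
  have "star_right sM YM (w i) a k \<in> right_span d"
    using i a k right_gens_subset_right_span by (blast intro: right_gensI)
  moreover have "(\<Sum>j\<le>k. sM (ibinom (int k) j - ibinom (int k - 1) j) (YM a (int j - 1) (w i)))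
      \<in> right_span d"
  proof (intro M.subspace_sum[OF subspace_right_span])
    fix j
    show "sM (ibinom (int k) j - ibinom (int k - 1) j) (YM a (int j - 1) (w i)) \<in> right_span d"
    proof (cases "j = 0")
      case False
      then have "YM a (int j - 1) (w i) \<in> right_span d"
        using i k w_Mg by (intro YM_in_lower_degrees[OF a _ _ subspace_right_span lower]) auto
      then show ?thesis
        by (rule M.subspace_scale[OF subspace_right_span])
    qed (simp add: M.subspace_0[OF subspace_right_span])
  qed
  ultimately have "star_right sM YM (w i) a k
      + (\<Sum>j\<le>k. sM (ibinom (int k) j - ibinom (int k - 1) j) (YM a (int j - 1) (w i))) \<in> right_span d"
    by (rule M.subspace_add[OF subspace_right_span])
  then show "x \<in> right_span d"
    by (simp add: x star_left_def star_right_def M.scale_left_diff_distrib sum_subtractf)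
qed

lemma Mg_subset_right_span: "Mg d \<subseteq> right_span d"
proof (induction d rule: less_induct)
  case (less d)
  have "Mg e \<subseteq> right_span d" if "e < d" for e
    using less[OF that] right_span_mono[of e d] that by auto
  then have "left_gens d \<subseteq> right_span d"
    by (rule left_gens_subset_right_span)
  then have "left_span d \<subseteq> right_span d"
    unfolding left_span_eq[of d]
    by (intro M.span_minimal subspace_right_span Un_least O_M_subset_right_span)
  then show ?case
    using Mg_subset_left_span by blast
qed

lemma modes_sum_in_A_M:
  assumes "a \<in> V_wt (int k)" "v \<in> Mg e" "k + e \<le> n"
  shows "(\<Sum>j\<le>k. sM (coef j) (YM a (int j - 1) v)) \<in> A_M n"
  using assms Mg_subset_A_M
  by (intro M.subspace_sum[OF subspace_A_M] M.subspace_scale[OF subspace_A_M]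
      YM_in_lower_degrees[OF assms(1,2) _ subspace_A_M, of _ "Suc n"]) auto

lemma A_M_eq_left_span: "A_M n = left_span n"
proof
  show "A_M n \<subseteq> left_span n"
    unfolding A_M_eq
  proof (intro M.span_minimal subspace_left_span Un_least UN_least O_M_subset_left_span)
    show "Mg i \<subseteq> left_span n" if "i \<in> {..n}" for i
      using that Mg_subset_left_span[of i] left_span_mono[of i n] by auto
  qed
  show "left_span n \<subseteq> A_M n"
    unfolding left_span_eq
  proof (intro M.span_minimal subspace_A_M Un_least O_M_subset_A_M subsetI, elim left_gensE)
    fix x i a k
    assume "i < r" and x: "x = star_left sM YM a k (w i)" and "a \<in> V_wt (int k)" "k + nn i \<le> n"
    then show "x \<in> A_M n"
      unfolding x star_left_def using w_Mg by (intro modes_sum_in_A_M[of a k "w i" "nn i"]) auto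
  qed
qed

lemma A_M_eq_right_span: "A_M n = right_span n"
proof
  show "A_M n \<subseteq> right_span n"
    unfolding A_M_eq
  proof (intro M.span_minimal subspace_right_span Un_least UN_least O_M_subset_right_span)
    show "Mg i \<subseteq> right_span n" if "i \<in> {..n}" for i
      using that Mg_subset_right_span[of i] right_span_mono[of i n] by auto
  qed
  show "right_span n \<subseteq> A_M n"
    unfolding right_span_eq
  proof (intro M.span_minimal subspace_A_M Un_least O_M_subset_A_M subsetI, elim right_gensE)
    fix x i a k
    assume "i < r" and x: "x = star_right sM YM (w i) a k" and "a \<in> V_wt (int k)" "k + nn i \<le> n"
    then show "x \<in> A_M n"
      unfolding x star_right_def using w_Mg by (intro modes_sum_in_A_M[of a k "w i" "nn i"]) auto
  qed
qed

end

theorem proposition4p11: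
  fixes sV :: "complex \<Rightarrow> 'v::ab_group_add \<Rightarrow> 'v" and Y :: "('v,'v) vop"
    and vac \<omega> :: 'v and c :: complex
    and sM :: "complex \<Rightarrow> 'm::ab_group_add \<Rightarrow> 'm" and YM :: "('v,'m) vop"
    and Mg :: "nat \<Rightarrow> 'm set"
    and r :: nat and w :: "nat \<Rightarrow> 'm" and nn :: "nat \<Rightarrow> nat"
  assumes "is_VOA_CFT_type sV Y vac \<omega> c"
    and "admissible sV Y vac \<omega> sM YM Mg"
    and "strongly_generated sV Y \<omega> sM YM (w ` {..<r})"
    and "\<forall>i<r. w i \<in> Mg (nn i)"
  shows "\<forall>n. AM_filt sV Y \<omega> sM YM Mg n = left_gen_span sV Y \<omega> sM YM r w nn n
           \<and> AM_filt sV Y \<omega> sM YM Mg n = right_gen_span sV Y \<omega> sM YM r w nn n"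
proof -
  interpret strongly_generated_module sV Y vac \<omega> c sM YM Mg r w nn
    using assms by unfold_locales (auto simp: is_VOA_CFT_type_def admissible_def)
  show ?thesis
    using A_M_eq_left_span A_M_eq_right_span by blast
qed

end
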